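(* The tuple $(p,\sqrt{1-p^2})$ is not simulable.
   Context: Let $p\in[0,1]$ be an unknown parameter and let $|p\rangle=\sqrt{p}|0\rangle+\sqrt{1-p}|1\rangle$. For a complex function $h(p)$ write $|f_h\rangle=\frac{1}{\sqrt{1+|h(p)|^2}}(h(p)|0\rangle+|1\rangle)$. A tuple $(k_0(p),k_1(p))$ of complex functions with $|k_0|^2+|k_1|^2=1$ is called simulable if, starting from an unbounded supply of copies of $|p\rangle$, one can produce the single-qubit state $|f_{k_0/k_1}\rangle=k_0(p)|0\rangle+k_1(p)|1\rangle$ (up to a global phase) in finitely many steps with nonzero success probability, where each step applies a unitary transformation or a measurement (in the computational basis) to the current state together with auxiliary qubits; the operations may not depend on $p$. Auxiliary qubits may be other simulable states or constant states $|a_c\rangle=\frac{1}{\sqrt{|a|^2+1}}(a|0\rangle+|1\rangle)$ with $a\in\mathbb{C}$ a constant independent of $p$. *)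

theory Defs
  imports Complex_Main
begin

text \<open>Multi-qubit states: an n-qubit (unnormalised) state depending on the parameter p is a
function  real => bool list => complex ; only the values at bit lists of length n matter
(False = |0>, True = |1>, the first list entry is the first qubit).\<close>

type_synonym pstate = "real \<Rightarrow> bool list \<Rightarrow> complex"

definition bitlists :: "nat \<Rightarrow> bool list set" where
  "bitlists n = {xs. length xs = n}"

definition qubit :: "complex \<Rightarrow> complex \<Rightarrow> bool list \<Rightarrow> complex" where
  "qubit a0 a1 = (\<lambda>xs. if xs = [False] then a0 else if xs = [True] then a1 else 0)"

definition pstate_in :: pstate where
  "pstate_in = (\<lambda>p. qubit (complex_of_real (sqrt p)) (complex_of_real (sqrt (1 - p))))"

definition const_state :: "complex \<Rightarrow> pstate" where
  "const_state a = (\<lambda>p. qubit (a / complex_of_real (sqrt ((cmod a)\<^sup>2 + 1)))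
                                 (1 / complex_of_real (sqrt ((cmod a)\<^sup>2 + 1))))"

definition unitary_on :: "nat \<Rightarrow> (bool list \<Rightarrow> bool list \<Rightarrow> complex) \<Rightarrow> bool" where
  "unitary_on n U \<longleftrightarrow> (\<forall>x\<in>bitlists n. \<forall>y\<in>bitlists n.
      (\<Sum>z\<in>bitlists n. cnj (U z x) * U z y) = (if x = y then 1 else 0))"

text \<open>reach n psi: the (unnormalised, post-selected) n-qubit state psi can be obtained along
  one branch of a finite protocol: start from the empty register; append auxiliary qubits
  (copies of |p>, constant states, or already simulable states); apply p-independent
  unitaries; measure a qubit in the computational basis and keep the branch with outcome b
  (the measured qubit is discarded).  simulable k0 k1: some protocol ends in a single qubit
  whose state is nonzero (nonzero success probability) and proportional to k0|0>+k1|1>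
  (i.e. equal to it up to a global phase after normalisation), for every p in [0,1].\<close>
inductive reach :: "nat \<Rightarrow> pstate \<Rightarrow> bool"
  and simulable :: "(real \<Rightarrow> complex) \<Rightarrow> (real \<Rightarrow> complex) \<Rightarrow> bool"
where
  empty: "reach 0 (\<lambda>p xs. if xs = [] then 1 else 0)"
| add_input: "reach n \<psi> \<Longrightarrow>
     reach (Suc n) (\<lambda>p xs. \<psi> p (take n xs) * pstate_in p (drop n xs))"
| add_const: "reach n \<psi> \<Longrightarrow>
     reach (Suc n) (\<lambda>p xs. \<psi> p (take n xs) * const_state a p (drop n xs))"
| add_sim: "reach n \<psi> \<Longrightarrow> simulable k0 k1 \<Longrightarrow>
     reach (Suc n) (\<lambda>p xs. \<psi> p (take n xs) * qubit (k0 p) (k1 p) (drop n xs))"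
| apply_unitary: "reach n \<psi> \<Longrightarrow> unitary_on n U \<Longrightarrow>
     reach n (\<lambda>p x. \<Sum>y\<in>bitlists n. U x y * \<psi> p y)"
| measure: "reach (Suc n) \<psi> \<Longrightarrow> i \<le> n \<Longrightarrow>
     reach n (\<lambda>p xs. \<psi> p (take i xs @ b # drop i xs))"
| sim: "(\<forall>p\<in>{0..1}. (cmod (k0 p))\<^sup>2 + (cmod (k1 p))\<^sup>2 = 1) \<Longrightarrow>
     reach 1 \<psi> \<Longrightarrow>
     (\<forall>p\<in>{0..1}. (\<psi> p [False] \<noteq> 0 \<or> \<psi> p [True] \<noteq> 0) \<and>
                   \<psi> p [False] * k1 p = \<psi> p [True] * k0 p) \<Longrightarrow>
     simulable k0 k1"

end

theory Submission
  imports Defs "HOL-Complex_Analysis.Complex_Analysis"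
begin

text \<open>Substituting \<open>p = sin\<^sup>2 \<theta>\<close> with \<open>\<theta> \<in> [0, \<pi>/2]\<close> turns the input state into
  \<open>sin \<theta> |0> + cos \<theta> |1>\<close>, whose amplitudes are entire functions of \<open>\<theta>\<close>.  Appending qubits,
  p-independent unitaries and post-selection preserve the property that every amplitude is
  an entire function of \<open>\<theta>\<close> times a common scalar, so every simulable pair \<open>(k\<^sub>0, k\<^sub>1)\<close> is
  proportional to a pair \<open>(G\<^sub>0, G\<^sub>1)\<close> of entire functions.  For \<open>k\<^sub>0 = p\<close>,
  \<open>k\<^sub>1 = \<surd>(1 - p\<^sup>2)\<close> this gives \<open>sin\<^sup>4 \<theta> G\<^sub>1\<^sup>2 = (1 - sin\<^sup>4 \<theta>) G\<^sub>0\<^sup>2\<close> on a real interval,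
  hence on all of \<open>\<complex>\<close>.  At a point \<open>z\<^sub>0\<close> with \<open>sin z\<^sub>0 = i\<close> the factor \<open>1 - sin\<^sup>4\<close> has a
  simple zero while \<open>sin\<^sup>4\<close> does not vanish, so the orders of vanishing of the two sides
  differ in parity unless \<open>G\<^sub>0\<close> or \<open>G\<^sub>1\<close> vanishes identically; neither does, since \<open>p\<close> and
  \<open>\<surd>(1 - p\<^sup>2)\<close> are nonzero at \<open>p = 1/2\<close>.\<close>

lemma holomorphic_on_qubit:
  assumes "f holomorphic_on A" "g holomorphic_on A"
  shows "(\<lambda>z. qubit (f z) (g z) xs) holomorphic_on A"
  using assms unfolding qubit_def
  by (cases "xs = [False]"; cases "xs = [True]") (auto intro: holomorphic_intros)

lemma pstate_in_sin_square:
  assumes "0 \<le> \<theta>" "\<theta> \<le> pi/2"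
  shows "pstate_in ((sin \<theta>)\<^sup>2) = qubit (sin (of_real \<theta>)) (cos (of_real \<theta>))"
proof -
  have "0 \<le> sin \<theta>" "0 \<le> cos \<theta>"
    using assms by (auto intro: sin_ge_zero cos_ge_zero)
  moreover have "1 - (sin \<theta>)\<^sup>2 = (cos \<theta>)\<^sup>2"
    by (simp add: cos_squared_eq)
  ultimately show ?thesis
    unfolding pstate_in_def by (simp add: sin_of_real cos_of_real)
qed

text \<open>The scalar \<open>c\<close> is an arbitrary function of \<open>\<theta>\<close>: it absorbs the p-dependent
  proportionality factor allowed in the definition of simulability.\<close>
definition scaled_entire :: "pstate \<Rightarrow> bool" where
  "scaled_entire \<psi> \<longleftrightarrow> (\<exists>c G. (\<forall>x. G x holomorphic_on UNIV) \<and>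
     (\<forall>\<theta>\<in>{0..pi/2}. \<forall>x. \<psi> ((sin \<theta>)\<^sup>2) x = c \<theta> * G x (of_real \<theta>)))"

lemma scaled_entireI:
  assumes "\<And>x. G x holomorphic_on UNIV"
    and "\<And>\<theta> x. \<theta> \<in> {0..pi/2} \<Longrightarrow> \<psi> ((sin \<theta>)\<^sup>2) x = c \<theta> * G x (of_real \<theta>)"
  shows "scaled_entire \<psi>"
  using assms unfolding scaled_entire_def by blast

lemma scaled_entire_const: "scaled_entire (\<lambda>_. \<phi>)"
  by (rule scaled_entireI[where c = "\<lambda>_. 1" and G = "\<lambda>x _. \<phi> x"]) auto

lemma scaled_entire_pstate_in: "scaled_entire pstate_in"
  by (rule scaled_entireI[where c = "\<lambda>_. 1" and G = "\<lambda>x z. qubit (sin z) (cos z) x"])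
     (auto intro!: holomorphic_on_qubit holomorphic_intros simp: pstate_in_sin_square)

lemma scaled_entire_tensor:
  assumes "scaled_entire \<psi>" "scaled_entire \<phi>"
  shows "scaled_entire (\<lambda>p xs. \<psi> p (take n xs) * \<phi> p (drop n xs))"
proof -
  obtain G c where G: "\<And>x. G x holomorphic_on UNIV"
    and \<psi>: "\<And>\<theta> x. \<theta> \<in> {0..pi/2} \<Longrightarrow> \<psi> ((sin \<theta>)\<^sup>2) x = c \<theta> * G x (of_real \<theta>)"
    using assms(1) unfolding scaled_entire_def by blast
  obtain H d where H: "\<And>x. H x holomorphic_on UNIV"
    and \<phi>: "\<And>\<theta> x. \<theta> \<in> {0..pi/2} \<Longrightarrow> \<phi> ((sin \<theta>)\<^sup>2) x = d \<theta> * H x (of_real \<theta>)"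
    using assms(2) unfolding scaled_entire_def by blast
  show ?thesis
    by (rule scaled_entireI[where c = "\<lambda>\<theta>. c \<theta> * d \<theta>"
          and G = "\<lambda>xs z. G (take n xs) z * H (drop n xs) z"])
       (auto intro!: holomorphic_intros G H simp: \<psi> \<phi>)
qed

lemma scaled_entire_linear:
  assumes "scaled_entire \<psi>"
  shows "scaled_entire (\<lambda>p x. \<Sum>y\<in>A. U x y * \<psi> p y)"
proof -
  obtain G c where G: "\<And>x. G x holomorphic_on UNIV"
    and \<psi>: "\<And>\<theta> x. \<theta> \<in> {0..pi/2} \<Longrightarrow> \<psi> ((sin \<theta>)\<^sup>2) x = c \<theta> * G x (of_real \<theta>)"
    using assms unfolding scaled_entire_def by blast
  show ?thesis
    by (rule scaled_entireI[where c = c and G = "\<lambda>x z. \<Sum>y\<in>A. U x y * G y z"])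
       (auto intro!: holomorphic_intros G simp: \<psi> sum_distrib_left mult.left_commute)
qed

lemma scaled_entire_reindex:
  assumes "scaled_entire \<psi>"
  shows "scaled_entire (\<lambda>p xs. \<psi> p (f xs))"
proof -
  obtain G c where "\<And>x. G x holomorphic_on UNIV"
    and "\<And>\<theta> x. \<theta> \<in> {0..pi/2} \<Longrightarrow> \<psi> ((sin \<theta>)\<^sup>2) x = c \<theta> * G x (of_real \<theta>)"
    using assms unfolding scaled_entire_def by blast
  then show ?thesis
    by (intro scaled_entireI[where c = c and G = "\<lambda>x. G (f x)"])
qed

lemma proportional_of_cross_eq:
  fixes a0 a1 k0 k1 :: "'a :: field"
  assumes "a0 \<noteq> 0 \<or> a1 \<noteq> 0" "a0 * k1 = a1 * k0"
  shows "\<exists>\<mu>. k0 = \<mu> * a0 \<and> k1 = \<mu> * a1"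
proof (cases "a0 = 0")
  case True
  with assms show ?thesis by (intro exI[of _ "k1 / a1"]) auto
next
  case False
  with assms show ?thesis by (intro exI[of _ "k0 / a0"]) (auto simp: field_simps)
qed

lemma scaled_entire_qubit_proportional:
  assumes "scaled_entire \<psi>"
    and "\<forall>p\<in>{0..1}. (\<psi> p [False] \<noteq> 0 \<or> \<psi> p [True] \<noteq> 0) \<and>
                    \<psi> p [False] * k1 p = \<psi> p [True] * k0 p"
  shows "scaled_entire (\<lambda>p. qubit (k0 p) (k1 p))"
proof -
  obtain G c where G: "\<And>x. G x holomorphic_on UNIV"
    and \<psi>: "\<And>\<theta> x. \<theta> \<in> {0..pi/2} \<Longrightarrow> \<psi> ((sin \<theta>)\<^sup>2) x = c \<theta> * G x (of_real \<theta>)"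
    using assms(1) unfolding scaled_entire_def by blast
  have "\<exists>\<mu>. k0 ((sin \<theta>)\<^sup>2) = \<mu> * \<psi> ((sin \<theta>)\<^sup>2) [False] \<and>
             k1 ((sin \<theta>)\<^sup>2) = \<mu> * \<psi> ((sin \<theta>)\<^sup>2) [True]" for \<theta>
  proof (rule proportional_of_cross_eq)
    have "(sin \<theta>)\<^sup>2 \<in> {0..1}"
      by (simp add: abs_square_le_1)
    then show "\<psi> ((sin \<theta>)\<^sup>2) [False] \<noteq> 0 \<or> \<psi> ((sin \<theta>)\<^sup>2) [True] \<noteq> 0"
      and "\<psi> ((sin \<theta>)\<^sup>2) [False] * k1 ((sin \<theta>)\<^sup>2) = \<psi> ((sin \<theta>)\<^sup>2) [True] * k0 ((sin \<theta>)\<^sup>2)"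
      using assms(2) by blast+
  qed
  then obtain \<mu> where \<mu>: "\<And>\<theta>. k0 ((sin \<theta>)\<^sup>2) = \<mu> \<theta> * \<psi> ((sin \<theta>)\<^sup>2) [False] \<and>
      k1 ((sin \<theta>)\<^sup>2) = \<mu> \<theta> * \<psi> ((sin \<theta>)\<^sup>2) [True]"
    by metis
  show ?thesis
    by (rule scaled_entireI[where c = "\<lambda>\<theta>. \<mu> \<theta> * c \<theta>"
          and G = "\<lambda>x z. qubit (G [False] z) (G [True] z) x"])
       (auto intro!: holomorphic_on_qubit G, auto simp: \<mu> \<psi> qubit_def)
qed

lemma reach_simulable_scaled_entire:
  "(reach n \<psi> \<longrightarrow> scaled_entire \<psi>) \<and>
   (simulable k0 k1 \<longrightarrow> scaled_entire (\<lambda>p. qubit (k0 p) (k1 p)))"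
proof (induction rule: reach_simulable.induct)
  case empty
  show ?case by (rule scaled_entire_const)
next
  case (add_input n \<psi>)
  show ?case using add_input.IH scaled_entire_pstate_in by (rule scaled_entire_tensor)
next
  case (add_const n \<psi> a)
  show ?case
    using add_const.IH scaled_entire_const unfolding const_state_def by (rule scaled_entire_tensor)
next
  case (add_sim n \<psi> k0 k1)
  show ?case using add_sim.IH by (rule scaled_entire_tensor)
next
  case (apply_unitary n \<psi> U)
  show ?case using apply_unitary.IH by (rule scaled_entire_linear)
next
  case (measure n \<psi> i b)
  show ?case using measure.IH by (rule scaled_entire_reindex)
next
  case (sim k0 k1 \<psi>)
  show ?case using sim.IH sim.hyps(3) by (rule scaled_entire_qubit_proportional)
qed

lemma entire_eq_on_real_interval:
  fixes f g :: "complex \<Rightarrow> complex"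
  assumes "f holomorphic_on UNIV" "g holomorphic_on UNIV" "a < b"
    and "\<And>t. t \<in> {a..b} \<Longrightarrow> f (of_real t) = g (of_real t)"
  shows "f z = g z"
proof -
  have "a islimpt {a..b}"
    using \<open>a < b\<close> by simp
  moreover have "isCont (of_real :: real \<Rightarrow> complex) a"
    by (intro continuous_intros)
  moreover have "eventually (\<lambda>t. (of_real t :: complex) \<noteq> of_real a) (at a)"
    by (simp add: eventually_at_filter)
  ultimately have limit_point: "of_real a islimpt (of_real ` {a..b} :: complex set)"
    by (rule islimpt_isCont_image)
  have "f z - g z = 0"
  proof (rule analytic_continuation[where f = "\<lambda>z. f z - g z",
        OF _ open_UNIV connected_UNIV subset_UNIV UNIV_I limit_point _ UNIV_I])
    show "(\<lambda>z. f z - g z) holomorphic_on UNIV"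
      using assms(1,2) by (rule holomorphic_on_diff)
    show "\<And>z. z \<in> of_real ` {a..b} \<Longrightarrow> f z - g z = 0"
      using assms(4) by auto
  qed
  then show ?thesis by simp
qed

lemma zorder_mult_square:
  assumes "f analytic_on {z}" "g analytic_on {z}"
    and "eventually (\<lambda>w. f w \<noteq> 0) (at z)" "eventually (\<lambda>w. g w \<noteq> 0) (at z)"
  shows "zorder (\<lambda>w. f w * g w ^ 2) z = zorder f z + 2 * zorder g z"
proof -
  have "zorder (\<lambda>w. g w * g w) z = zorder g z + zorder g z"
    using assms by (intro zorder_times_analytic) (auto elim: eventually_mono)
  moreover have "zorder (\<lambda>w. f w * (g w * g w)) z = zorder f z + zorder (\<lambda>w. g w * g w) z"
    using assms(3,4)
    by (intro zorder_times_analytic analytic_intros assms(1,2))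
       (auto elim: eventually_elim2)
  ultimately show ?thesis by (simp add: power2_eq_square)
qed

lemma entire_square_ratio_sin_power4_trivial:
  fixes G0 G1 :: "complex \<Rightarrow> complex"
  assumes "G0 holomorphic_on UNIV" "G1 holomorphic_on UNIV"
    and eq: "\<And>w. sin w ^ 4 * G1 w ^ 2 = (1 - sin w ^ 4) * G0 w ^ 2"
  shows "(\<forall>w. G0 w = 0) \<or> (\<forall>w. G1 w = 0)"
proof (rule ccontr)
  assume "\<not> ?thesis"
  then obtain \<beta>0 \<beta>1 where "G0 \<beta>0 \<noteq> 0" "G1 \<beta>1 \<noteq> 0" by blast
  define z0 where "z0 = Arcsin \<i>"
  have sin_z0: "sin z0 = \<i>"
    unfolding z0_def by simp
  have "cos z0 ^ 2 = 2"
    using sin_cos_squared_add[of z0] by (simp add: sin_z0 power2_eq_square)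
  then have "cos z0 \<noteq> 0" by auto
  have ev: "eventually (\<lambda>w. f w \<noteq> 0) (at z0)" if "f holomorphic_on UNIV" "f \<beta> \<noteq> 0" for f \<beta>
    using non_zero_neighbour_alt[OF that(1) open_UNIV connected_UNIV UNIV_I UNIV_I that(2)]
    by (auto elim: eventually_mono)
  have "G0 analytic_on {z0}" "G1 analytic_on {z0}"
    using assms(1,2) by (auto intro: holomorphic_on_imp_analytic_at)
  moreover have "eventually (\<lambda>w. G0 w \<noteq> 0) (at z0)" "eventually (\<lambda>w. G1 w \<noteq> 0) (at z0)"
    using ev assms(1,2) \<open>G0 \<beta>0 \<noteq> 0\<close> \<open>G1 \<beta>1 \<noteq> 0\<close> by blast+
  moreover have "eventually (\<lambda>w. sin w ^ 4 \<noteq> 0) (at z0)"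
    by (rule ev[of _ z0]) (auto intro!: holomorphic_intros simp: sin_z0)
  moreover have "eventually (\<lambda>w. 1 - sin w ^ 4 \<noteq> 0) (at z0)"
    by (rule ev[of _ 0]) (auto intro!: holomorphic_intros)
  ultimately have "zorder (\<lambda>w. sin w ^ 4) z0 + 2 * zorder G1 z0 =
      zorder (\<lambda>w. 1 - sin w ^ 4) z0 + 2 * zorder G0 z0"
    using zorder_mult_square[of "\<lambda>w. sin w ^ 4" z0 G1]
      zorder_mult_square[of "\<lambda>w. 1 - sin w ^ 4" z0 G0]
    by (simp add: eq analytic_intros)
  moreover have "zorder (\<lambda>w. sin w ^ 4) z0 = 0"
    by (intro zorder_eq_0I analytic_intros) (simp add: sin_z0)
  moreover have "zorder (\<lambda>w. 1 - sin w ^ 4) z0 = 1"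
  proof (rule zorder_zero_eqI')
    have "deriv (\<lambda>w. 1 - sin w ^ 4) z0 = - (4 * sin z0 ^ 3 * cos z0)"
      by (rule DERIV_imp_deriv) (auto intro!: derivative_eq_intros)
    then show "(deriv ^^ nat 1) (\<lambda>w. 1 - sin w ^ 4) z0 \<noteq> 0"
      using \<open>cos z0 \<noteq> 0\<close> by (simp add: sin_z0)
  qed (auto intro!: analytic_intros simp: sin_z0)
  ultimately show False by presburger
qed

lemma scaled_entire_sqrt_pair_identity:
  assumes "scaled_entire (\<lambda>p. qubit (of_real p) (of_real (sqrt (1 - p\<^sup>2))))"
  obtains G0 G1 :: "complex \<Rightarrow> complex"
  where "G0 holomorphic_on UNIV" "G1 holomorphic_on UNIV"
    and "\<And>w. sin w ^ 4 * G1 w ^ 2 = (1 - sin w ^ 4) * G0 w ^ 2"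
    and "G0 (of_real (pi/4)) \<noteq> 0" "G1 (of_real (pi/4)) \<noteq> 0"
proof -
  obtain G c where G: "\<And>x. G x holomorphic_on UNIV"
    and eq: "\<And>\<theta> x. \<theta> \<in> {0..pi/2} \<Longrightarrow>
      qubit (of_real ((sin \<theta>)\<^sup>2)) (of_real (sqrt (1 - ((sin \<theta>)\<^sup>2)\<^sup>2))) x = c \<theta> * G x (of_real \<theta>)"
    using assms unfolding scaled_entire_def by blast
  define G0 G1 where "G0 = G [False]" and "G1 = G [True]"
  have amplitudes: "of_real ((sin \<theta>)\<^sup>2) = c \<theta> * G0 (of_real \<theta>)"
      "of_real (sqrt (1 - (sin \<theta>) ^ 4)) = c \<theta> * G1 (of_real \<theta>)"
    if "\<theta> \<in> {0..pi/2}" for \<theta>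
    using eq[OF that, of "[False]"] eq[OF that, of "[True]"]
    by (simp_all add: G0_def G1_def qubit_def flip: power_mult)
  have identity: "sin w ^ 4 * G1 w ^ 2 = (1 - sin w ^ 4) * G0 w ^ 2" for w
  proof (rule entire_eq_on_real_interval[where f = "\<lambda>w. sin w ^ 4 * G1 w ^ 2"
        and g = "\<lambda>w. (1 - sin w ^ 4) * G0 w ^ 2" and a = 0 and b = "pi/2"])
    fix t :: real
    assume t: "t \<in> {0..pi/2}"
    have "(sqrt (1 - sin t ^ 4))\<^sup>2 = 1 - sin t ^ 4"
      using power_le_one[OF abs_ge_zero abs_sin_le_one, of t 4] by simp
    then have root: "(of_real (sqrt (1 - sin t ^ 4)))\<^sup>2 = 1 - (of_real (sin t) :: complex) ^ 4"
      by (metis of_real_1 of_real_diff of_real_power)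
    have "of_real ((sin t)\<^sup>2) * G1 (of_real t) = of_real (sqrt (1 - sin t ^ 4)) * G0 (of_real t)"
      using amplitudes[OF t] by (simp add: ac_simps)
    then have "(of_real ((sin t)\<^sup>2) * G1 (of_real t))\<^sup>2 =
        (of_real (sqrt (1 - sin t ^ 4)) * G0 (of_real t))\<^sup>2"
      by simp
    then show "sin (of_real t) ^ 4 * G1 (of_real t) ^ 2 =
        (1 - sin (of_real t) ^ 4) * G0 (of_real t) ^ 2"
      by (simp only: power_mult_distrib root sin_of_real of_real_power flip: power_mult) simp
  qed (auto intro!: holomorphic_intros G simp: G0_def G1_def)
  have nonzero: "G0 (of_real (pi/4)) \<noteq> 0" "G1 (of_real (pi/4)) \<noteq> 0"
  proof -
    have sin_sq: "(sin (pi/4))\<^sup>2 = (1/2 :: real)"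
      by (simp add: sin_45 power_divide)
    have "sin (pi/4) ^ 4 = ((sin (pi/4))\<^sup>2)\<^sup>2"
      by (simp flip: power_mult)
    then have "sin (pi/4) ^ 4 = (1/4 :: real)"
      by (simp add: sin_sq power_divide)
    then show "G0 (of_real (pi/4)) \<noteq> 0" "G1 (of_real (pi/4)) \<noteq> 0"
      using amplitudes[of "pi/4"] sin_sq by auto
  qed
  have "G0 holomorphic_on UNIV" "G1 holomorphic_on UNIV"
    by (simp_all add: G0_def G1_def G)
  then show thesis
    using identity nonzero by (rule that)
qed

theorem mainTheorem3:
  shows "\<not> simulable (\<lambda>p. complex_of_real p) (\<lambda>p. complex_of_real (sqrt (1 - p\<^sup>2)))"
proof
  assume "simulable (\<lambda>p. complex_of_real p) (\<lambda>p. complex_of_real (sqrt (1 - p\<^sup>2)))"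
  then have "scaled_entire (\<lambda>p. qubit (of_real p) (of_real (sqrt (1 - p\<^sup>2))))"
    by (rule reach_simulable_scaled_entire[THEN conjunct2, rule_format])
  then show False
  proof (rule scaled_entire_sqrt_pair_identity)
    fix G0 G1 :: "complex \<Rightarrow> complex"
    assume "G0 holomorphic_on UNIV" "G1 holomorphic_on UNIV"
      and "\<And>w. sin w ^ 4 * G1 w ^ 2 = (1 - sin w ^ 4) * G0 w ^ 2"
    then have "(\<forall>w. G0 w = 0) \<or> (\<forall>w. G1 w = 0)"
      by (rule entire_square_ratio_sin_power4_trivial)
    moreover assume "G0 (of_real (pi/4)) \<noteq> 0" "G1 (of_real (pi/4)) \<noteq> 0"
    ultimately show False by blast
  qed
qed

end
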